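(* Let $a\in[0,\infty)$ and let $t:[0,1]\to[0,\infty]$ and $s:[0,\infty]\to[0,1]$ be continuous and increasing functions such that $G_{t,s}(x,y)=s(t(x)+t(y))$ defines a grouping function $G_{t,s}:[0,1]^2\to[0,1]$, and suppose that at least one of the following holds: (1) $t(x)=\frac{a}{2}$ if and only if $x=0$; (2) $s(x)=0$ if and only if $x\in[0,a]$. Then there exist a pseudo automorphism $\mathcal{F}$ and a t-superconorm $T_{super}$ such that $G_{t,s}(x,y)=\mathcal{F}(T_{super}(x,y))$ for all $x,y\in[0,1]$.
   Context: "Increasing" means non-decreasing. Arithmetic in $[0,\infty]$ uses $c+\infty=\infty$; continuity on $[0,\infty]$ refers to the usual topology of the extended half-line. A grouping function is a map $G:[0,1]^2\to[0,1]$ that is (G1) commutative, (G2) $G(x,y)=0$ iff $x=y=0$, (G3) $G(x,y)=1$ iff $x=1$ or $y=1$, (G4) increasing in each variable, (G5) continuous. A pseudo automorphism is a continuous increasing map $\mathcal{F}:[0,1]\to[0,1]$ with $\mathcal{F}(x)=1$ iff $x=1$ and $\mathcal{F}(x)=0$ iff $x=0$. A t-superconorm is a commutative, associative map $S:[0,1]^2\to[0,1]$, increasing in each variable, with $S(x,y)\ge\max\{x,y\}$ for all $x,y$. *)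

theory Defs
  imports "HOL-Analysis.Analysis" "HOL-Library.Extended_Nonnegative_Real"
begin

definition grouping_function :: "(real \<Rightarrow> real \<Rightarrow> real) \<Rightarrow> bool" where
  "grouping_function G \<longleftrightarrow>
     (\<forall>x\<in>{0..1}. \<forall>y\<in>{0..1}. G x y \<in> {0..1}) \<and>
     (\<forall>x\<in>{0..1}. \<forall>y\<in>{0..1}. G x y = G y x) \<and>
     (\<forall>x\<in>{0..1}. \<forall>y\<in>{0..1}. G x y = 0 \<longleftrightarrow> x = 0 \<and> y = 0) \<and>
     (\<forall>x\<in>{0..1}. \<forall>y\<in>{0..1}. G x y = 1 \<longleftrightarrow> x = 1 \<or> y = 1) \<and>
     (\<forall>x\<in>{0..1}. \<forall>x'\<in>{0..1}. \<forall>y\<in>{0..1}. x \<le> x' \<longrightarrow> G x y \<le> G x' y) \<and>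
     (\<forall>x\<in>{0..1}. \<forall>y\<in>{0..1}. \<forall>y'\<in>{0..1}. y \<le> y' \<longrightarrow> G x y \<le> G x y') \<and>
     continuous_on ({0..1} \<times> {0..1}) (\<lambda>(x, y). G x y)"

definition pseudo_automorphism :: "(real \<Rightarrow> real) \<Rightarrow> bool" where
  "pseudo_automorphism F \<longleftrightarrow>
     F ` {0..1} \<subseteq> {0..1} \<and>
     continuous_on {0..1} F \<and> mono_on {0..1} F \<and>
     (\<forall>x\<in>{0..1}. F x = 1 \<longleftrightarrow> x = 1) \<and>
     (\<forall>x\<in>{0..1}. F x = 0 \<longleftrightarrow> x = 0)"

definition t_superconorm :: "(real \<Rightarrow> real \<Rightarrow> real) \<Rightarrow> bool" where
  "t_superconorm S \<longleftrightarrow>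
     (\<forall>x\<in>{0..1}. \<forall>y\<in>{0..1}. S x y \<in> {0..1}) \<and>
     (\<forall>x\<in>{0..1}. \<forall>y\<in>{0..1}. S x y = S y x) \<and>
     (\<forall>x\<in>{0..1}. \<forall>y\<in>{0..1}. \<forall>z\<in>{0..1}. S (S x y) z = S x (S y z)) \<and>
     (\<forall>x\<in>{0..1}. \<forall>x'\<in>{0..1}. \<forall>y\<in>{0..1}. x \<le> x' \<longrightarrow> S x y \<le> S x' y) \<and>
     (\<forall>x\<in>{0..1}. \<forall>y\<in>{0..1}. \<forall>y'\<in>{0..1}. y \<le> y' \<longrightarrow> S x y \<le> S x y') \<and>
     (\<forall>x\<in>{0..1}. \<forall>y\<in>{0..1}. max x y \<le> S x y)"

end

theory Submission
  imports Defs
begin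

text \<open>
  Put \<open>c = t 0\<close> and \<open>K = t 1\<close>. The map \<open>w \<mapsto> t w + c\<close> is continuous and increasing on
  \<open>[0,1]\<close> with range \<open>[2c, K + c]\<close>, so the sum \<open>t x + t y\<close>, truncated at \<open>K + c\<close>, has a
  greatest preimage \<open>T x y\<close> under it. The operation \<open>T\<close> inherits commutativity and
  monotonicity from addition, dominates \<open>max\<close> because \<open>t \<ge> c\<close>, and is associative because
  both bracketings of \<open>T x y z\<close> are determined by \<open>min (t x + t y + t z) (K + 2c)\<close>, which
  requires \<open>c < \<infinity>\<close> to cancel one \<open>c\<close>. Since \<open>s\<close> is already \<open>1\<close> at \<open>K + c\<close>, the truncation is
  invisible to \<open>s\<close>, so \<open>G x y = F (T x y)\<close> with \<open>F z = s (t z + c)\<close>, and \<open>F = G (-, 0)\<close>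
  is a pseudo automorphism by the boundary conditions of \<open>G\<close>.
\<close>

lemma min_add_distrib_left_mono:
  fixes a b c :: "'a::{linorder, ordered_ab_semigroup_add}"
  shows "min a b + c = min (a + c) (b + c)"
  unfolding min_def using add_right_mono[of a b c] add_right_mono[of b a c] by auto

definition greatest_preimage :: "(real \<Rightarrow> 'a) \<Rightarrow> 'a \<Rightarrow> real" where
  "greatest_preimage f v = Sup {w \<in> {0..1}. f w = v}"

context
  fixes f :: "real \<Rightarrow> 'a::linorder_topology"
  assumes f_cont: "continuous_on {0..1} f"
begin

lemma greatest_preimage:
  assumes "f 0 \<le> v" "v \<le> f 1"
  shows "greatest_preimage f v \<in> {0..1}" and "f (greatest_preimage f v) = v"
proof -
  let ?S = "{w \<in> {0..1}. f w = v}"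
  obtain x where "0 \<le> x" "x \<le> 1" "f x = v"
    using IVT'[of f 0 v 1] assms f_cont by auto
  then have "?S \<noteq> {}" by auto
  moreover have "bdd_above ?S" by (auto simp: bdd_above_def)
  moreover have "closed ?S"
    by (rule continuous_closed_preimage_constant[OF f_cont]) auto
  ultimately have "Sup ?S \<in> ?S" by (rule closed_contains_Sup)
  then show "greatest_preimage f v \<in> {0..1}" "f (greatest_preimage f v) = v"
    by (auto simp: greatest_preimage_def)
qed

context
  assumes f_mono: "mono_on {0..1} f"
begin

lemma le_greatest_preimage:
  assumes "f 0 \<le> v" "v \<le> f 1" "x \<in> {0..1}" "f x \<le> v"
  shows "x \<le> greatest_preimage f v"
proof (rule ccontr)
  let ?m = "greatest_preimage f v"
  assume "\<not> x \<le> ?m"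
  with greatest_preimage[OF assms(1,2)] assms(3) have "f ?m \<le> f x"
    by (intro mono_onD[OF f_mono]) auto
  with greatest_preimage(2)[OF assms(1,2)] assms(4) have "f x = v" by simp
  with assms(3) have "x \<le> ?m"
    unfolding greatest_preimage_def by (intro cSup_upper) (auto simp: bdd_above_def)
  with \<open>\<not> x \<le> ?m\<close> show False ..
qed

lemma greatest_preimage_mono:
  assumes "f 0 \<le> v" "v \<le> v'" "v' \<le> f 1"
  shows "greatest_preimage f v \<le> greatest_preimage f v'"
  using assms greatest_preimage[of v]
  by (intro le_greatest_preimage) auto

end

end

definition additive_superconorm :: "(real \<Rightarrow> ennreal) \<Rightarrow> real \<Rightarrow> real \<Rightarrow> real" where
  "additive_superconorm t x y = greatest_preimage (\<lambda>w. t w + t 0) (min (t x + t y) (t 1 + t 0))"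

lemma additive_superconorm_commute: "additive_superconorm t x y = additive_superconorm t y x"
  by (simp add: additive_superconorm_def add.commute)

context
  fixes t :: "real \<Rightarrow> ennreal"
  assumes t_cont: "continuous_on {0..1} t" and t_mono: "mono_on {0..1} t"
begin

private lemma shifted_cont: "continuous_on {0..1} (\<lambda>w. t w + t 0)"
  by (intro continuous_on_add t_cont continuous_on_const)

private lemma shifted_mono: "mono_on {0..1} (\<lambda>w. t w + t 0)"
  using t_mono by (auto simp: mono_on_def add_right_mono)

private lemma generator_bounds:
  assumes "x \<in> {0..1}"
  shows "t 0 \<le> t x" and "t x \<le> t 1"
  using assms by (auto intro: mono_onD[OF t_mono])

private lemma truncated_sum_bounds:
  assumes "x \<in> {0..1}" "y \<in> {0..1}"
  shows "t 0 + t 0 \<le> min (t x + t y) (t 1 + t 0)" and "min (t x + t y) (t 1 + t 0) \<le> t 1 + t 0"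
  using generator_bounds[OF assms(1)] generator_bounds[OF assms(2)] generator_bounds[of 1]
  by (auto intro: add_mono)

lemma additive_superconorm:
  assumes "x \<in> {0..1}" "y \<in> {0..1}"
  shows "additive_superconorm t x y \<in> {0..1}"
    and "t (additive_superconorm t x y) + t 0 = min (t x + t y) (t 1 + t 0)"
  using greatest_preimage[OF shifted_cont] truncated_sum_bounds[OF assms]
  by (auto simp: additive_superconorm_def)

lemma additive_superconorm_mono:
  assumes "x \<in> {0..1}" "x' \<in> {0..1}" "y \<in> {0..1}" "x \<le> x'"
  shows "additive_superconorm t x y \<le> additive_superconorm t x' y"
proof -
  have "t x \<le> t x'" using assms by (intro mono_onD[OF t_mono]) auto
  then have "min (t x + t y) (t 1 + t 0) \<le> min (t x' + t y) (t 1 + t 0)"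
    by (intro min.mono add_right_mono) auto
  then show ?thesis
    unfolding additive_superconorm_def
    using truncated_sum_bounds[OF assms(1,3)] truncated_sum_bounds[OF assms(2,3)]
    by (intro greatest_preimage_mono[OF shifted_cont shifted_mono]) auto
qed

lemma le_additive_superconorm:
  assumes "x \<in> {0..1}" "y \<in> {0..1}"
  shows "x \<le> additive_superconorm t x y"
proof -
  have "t x + t 0 \<le> min (t x + t y) (t 1 + t 0)"
    using generator_bounds[OF assms(1)] generator_bounds[OF assms(2)]
    by (auto intro: add_left_mono add_right_mono)
  then show ?thesis
    unfolding additive_superconorm_def
    using truncated_sum_bounds[OF assms] assms(1)
    by (intro le_greatest_preimage[OF shifted_cont shifted_mono]) auto
qed

private lemma additive_superconorm_triple:
  assumes "x \<in> {0..1}" "y \<in> {0..1}" "z \<in> {0..1}"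
  shows "min (t (additive_superconorm t x y) + t z) (t 1 + t 0) + t 0
           = min (t x + t y + t z) (t 1 + t 0 + t 0)"
proof -
  let ?T = "additive_superconorm t x y"
  have "min (t ?T + t z) (t 1 + t 0) + t 0 = min (t ?T + t z + t 0) (t 1 + t 0 + t 0)"
    by (rule min_add_distrib_left_mono)
  also have "\<dots> = min ((t ?T + t 0) + t z) (t 1 + t 0 + t 0)"
    by (simp only: add_ac)
  also have "\<dots> = min (min (t x + t y + t z) (t 1 + t 0 + t z)) (t 1 + t 0 + t 0)"
    by (simp add: additive_superconorm(2)[OF assms(1,2)] min_add_distrib_left_mono)
  also have "\<dots> = min (t x + t y + t z) (t 1 + t 0 + t 0)"
    using add_left_mono[OF generator_bounds(1)[OF assms(3)], of "t 1 + t 0"]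
    by (simp add: min.assoc min.absorb2)
  finally show ?thesis .
qed

lemma additive_superconorm_assoc:
  assumes "t 0 \<noteq> \<infinity>" "x \<in> {0..1}" "y \<in> {0..1}" "z \<in> {0..1}"
  shows "additive_superconorm t (additive_superconorm t x y) z
           = additive_superconorm t x (additive_superconorm t y z)"
proof -
  have "min (t (additive_superconorm t x y) + t z) (t 1 + t 0) + t 0
      = min (t (additive_superconorm t y z) + t x) (t 1 + t 0) + t 0"
    using additive_superconorm_triple[OF assms(2-4)] additive_superconorm_triple[OF assms(3,4,2)]
    by (simp add: add_ac)
  with assms(1) show ?thesis
    by (simp add: additive_superconorm_def add.commute)
qed

lemma t_superconorm_additive_superconorm:
  assumes "t 0 \<noteq> \<infinity>"
  shows "t_superconorm (additive_superconorm t)"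
  unfolding t_superconorm_def
proof (intro conjI ballI impI)
  fix x y :: real assume "x \<in> {0..1}" "y \<in> {0..1}"
  then show "additive_superconorm t x y \<in> {0..1}" by (rule additive_superconorm(1))
  show "additive_superconorm t x y = additive_superconorm t y x"
    by (rule additive_superconorm_commute)
next
  fix x y z :: real assume "x \<in> {0..1}" "y \<in> {0..1}" "z \<in> {0..1}"
  then show "additive_superconorm t (additive_superconorm t x y) z
               = additive_superconorm t x (additive_superconorm t y z)"
    by (rule additive_superconorm_assoc[OF assms])
next
  fix x x' y :: real assume "x \<in> {0..1}" "x' \<in> {0..1}" "y \<in> {0..1}" "x \<le> x'"
  then show "additive_superconorm t x y \<le> additive_superconorm t x' y"
    by (rule additive_superconorm_mono)
next
  fix x y y' :: real assume "x \<in> {0..1}" "y \<in> {0..1}" "y' \<in> {0..1}" "y \<le> y'"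
  then show "additive_superconorm t x y \<le> additive_superconorm t x y'"
    using additive_superconorm_mono by (simp add: additive_superconorm_commute[of t x])
next
  fix x y :: real assume "x \<in> {0..1}" "y \<in> {0..1}"
  then have "x \<le> additive_superconorm t x y" "y \<le> additive_superconorm t y x"
    by (simp_all add: le_additive_superconorm)
  then show "max x y \<le> additive_superconorm t x y"
    by (simp add: additive_superconorm_commute[of t y x])
qed

end

context
  fixes t :: "real \<Rightarrow> ennreal" and s :: "ennreal \<Rightarrow> real"
  assumes G: "grouping_function (\<lambda>x y. s (t x + t y))"
begin

private lemma grouping_boundary:
  assumes "x \<in> {0..1}"
  shows "s (t x + t 0) = 0 \<longleftrightarrow> x = 0" and "s (t x + t 0) = 1 \<longleftrightarrow> x = 1"
  using G assms unfolding grouping_function_def by auto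

lemma grouping_generator_zero_finite: "t 0 \<noteq> \<infinity>"
  using grouping_boundary[of 0] grouping_boundary[of 1] by force

lemma pseudo_automorphism_grouping_section:
  assumes "continuous_on {0..1} t" "mono_on {0..1} t"
    and "continuous_on UNIV s" "mono s" "\<forall>u. s u \<in> {0..1}"
  shows "pseudo_automorphism (\<lambda>z. s (t z + t 0))"
  unfolding pseudo_automorphism_def
proof (intro conjI ballI)
  show "(\<lambda>z. s (t z + t 0)) ` {0..1} \<subseteq> {0..1}" using assms(5) by auto
  show "continuous_on {0..1} (\<lambda>z. s (t z + t 0))"
    by (rule continuous_on_compose2[OF assms(3)]) (auto intro: continuous_on_add assms(1))
  show "mono_on {0..1} (\<lambda>z. s (t z + t 0))"
    using assms(2,4) by (auto simp: mono_on_def mono_def add_right_mono)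
qed (use grouping_boundary in auto)

lemma grouping_eq_additive_superconorm:
  assumes "continuous_on {0..1} t" "mono_on {0..1} t" "mono s" "\<forall>u. s u \<in> {0..1}"
    and "x \<in> {0..1}" "y \<in> {0..1}"
  shows "s (t x + t y) = s (t (additive_superconorm t x y) + t 0)"
proof (cases "t x + t y \<le> t 1 + t 0")
  case True
  then show ?thesis using additive_superconorm(2)[OF assms(1,2,5,6)] by simp
next
  case False
  have s_top: "s (t 1 + t 0) = 1" using grouping_boundary(2)[of 1] by simp
  with False assms(3,4) have "s (t x + t y) = 1"
    by (metis atLeastAtMost_iff antisym mono_def nle_le)
  moreover have "t (additive_superconorm t x y) + t 0 = t 1 + t 0"
    using additive_superconorm(2)[OF assms(1,2,5,6)] False by simp
  then have "s (t (additive_superconorm t x y) + t 0) = 1"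
    using s_top by (simp only:)
  ultimately show ?thesis by simp
qed

end

theorem proposition6p7:
  fixes a :: real and t :: "real \<Rightarrow> ennreal" and s :: "ennreal \<Rightarrow> real"
  assumes a: "0 \<le> a"
    and t_cont: "continuous_on {0..1} t" and t_mono: "mono_on {0..1} t"
    and s_cont: "continuous_on UNIV s" and s_mono: "mono s"
    and s_range: "\<forall>u. s u \<in> {0..1}"
    and G: "grouping_function (\<lambda>x y. s (t x + t y))"
    and cond: "(\<forall>x\<in>{0..1}. t x = ennreal (a / 2) \<longleftrightarrow> x = 0)
             \<or> (\<forall>u. s u = 0 \<longleftrightarrow> u \<in> {0..ennreal a})"
  shows "\<exists>F T. pseudo_automorphism F \<and> t_superconorm T \<and>
           (\<forall>x\<in>{0..1}. \<forall>y\<in>{0..1}. s (t x + t y) = F (T x y))"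
proof (intro exI conjI ballI)
  show "pseudo_automorphism (\<lambda>z. s (t z + t 0))"
    by (rule pseudo_automorphism_grouping_section[OF G t_cont t_mono s_cont s_mono s_range])
  show "t_superconorm (additive_superconorm t)"
    using t_superconorm_additive_superconorm[OF t_cont t_mono grouping_generator_zero_finite[OF G]] .
  show "s (t x + t y) = s (t (additive_superconorm t x y) + t 0)" if "x \<in> {0..1}" "y \<in> {0..1}" for x y
    using grouping_eq_additive_superconorm[OF G t_cont t_mono s_mono s_range that] .
qed

end
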